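(* Let $M$ be a three-dimensional warped product space and let $\vec r:\mathbb{S}^2\to M$ be an embedding as a strictly convex closed surface with unit normal $\nu$. Let $\varphi=X\cdot\nu$ be its support function, where $X=rf(r)\frac{\partial}{\partial r}$, and let $m_0=\{p\in\mathbb{S}^2:\vec r(p)=0\}$. Then $d\varphi\neq 0$ at every point of $$Z=\{p\in\mathbb{S}^2\setminus m_0:\varphi(p)=0\},$$ so $Z$ is a regular curve on the sphere.
   Context: A three-dimensional warped product space is (a region of) $\mathbb{R}^3$ with polar coordinates $(r,\theta)$ and metric $ds^2=\frac{1}{f(r)^2}dr^2+r^2dS_2^2$ ($dS_2^2$ round metric, $f$ smooth and positive), with inner product $\cdot$. $X=rf(r)\partial_r$ is the conformal Killing vector field of this space. Strictly convex means positive definite second fundamental form. *)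

theory Defs
  imports "HOL-Analysis.Analysis"
begin

text \<open>Points of the ambient region and of the parameter sphere are vectors in real^3.
  The standard sphere S^2 is sphere 0 1.\<close>

definition pd :: "3 \<Rightarrow> (real^3 \<Rightarrow> real) \<Rightarrow> real^3 \<Rightarrow> real" where
  "pd i g x = deriv (\<lambda>t. g (x + t *\<^sub>R axis i 1)) 0"

definition smooth_fun :: "(real^3) set \<Rightarrow> (real^3 \<Rightarrow> real) \<Rightarrow> bool" where
  "smooth_fun U g \<longleftrightarrow> open U \<and> (\<forall>is. \<forall>x\<in>U. foldr pd is g differentiable (at x))"

definition smooth_map :: "(real^3) set \<Rightarrow> (real^3 \<Rightarrow> real^3) \<Rightarrow> bool" where
  "smooth_map U F \<longleftrightarrow> (\<forall>k. smooth_fun U (\<lambda>x. F x $ k))"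

definition smooth1 :: "real set \<Rightarrow> (real \<Rightarrow> real) \<Rightarrow> bool" where
  "smooth1 U f \<longleftrightarrow> open U \<and> (\<forall>n. \<forall>t\<in>U. ((deriv ^^ n) f) differentiable (at t))"

text \<open>The warped product metric ds^2 = dr^2/f(r)^2 + r^2 dS_2^2 written in Cartesian
  coordinates: Euclidean metric plus (1/f^2 - 1) dr^2, where dr(v) = v.x/|x|.
  At the origin the value is the Euclidean inner product (forced by continuity).\<close>
definition gm :: "(real \<Rightarrow> real) \<Rightarrow> real^3 \<Rightarrow> real^3 \<Rightarrow> real^3 \<Rightarrow> real" where
  "gm f x v w = (if x = 0 then v \<bullet> w
      else v \<bullet> w + (1 / (f (norm x))\<^sup>2 - 1) * (v \<bullet> x) * (w \<bullet> x) / (norm x)\<^sup>2)"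

definition dgm :: "(real \<Rightarrow> real) \<Rightarrow> real^3 \<Rightarrow> real^3 \<Rightarrow> real^3 \<Rightarrow> real^3 \<Rightarrow> real" where
  "dgm f x a b w = deriv (\<lambda>t. gm f (x + t *\<^sub>R a) b w) 0"

text \<open>Christoffel symbols of the Levi-Civita connection (Koszul formula):
  Gamma(a,b) is the vector c with g(c,w) = 1/2 (a g(b,w) + b g(a,w) - w g(a,b)).\<close>
definition chr :: "(real \<Rightarrow> real) \<Rightarrow> real^3 \<Rightarrow> real^3 \<Rightarrow> real^3 \<Rightarrow> real^3" where
  "chr f x a b = (THE c. \<forall>w. gm f x c w =
      (dgm f x a b w + dgm f x b a w - dgm f x w a b) / 2)"

text \<open>The conformal Killing field X = r f(r) d/dr = f(|x|) x.\<close>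
definition ckf :: "(real \<Rightarrow> real) \<Rightarrow> real^3 \<Rightarrow> real^3" where
  "ckf f x = f (norm x) *\<^sub>R x"

text \<open>Second fundamental form of the surface R (restricted to the sphere) with unit
  normal N at p, on tangent vectors u v of the sphere at p:
  h(u,v) = - g(nabla_u N, dR v), nabla_u N = dN(u) + Gamma(dR u, N).\<close>
definition sff :: "(real \<Rightarrow> real) \<Rightarrow> (real^3 \<Rightarrow> real^3) \<Rightarrow> (real^3 \<Rightarrow> real^3)
                    \<Rightarrow> real^3 \<Rightarrow> real^3 \<Rightarrow> real^3 \<Rightarrow> real" where
  "sff f R N p u v = - gm f (R p)
      (frechet_derivative N (at p) u + chr f (R p) (frechet_derivative R (at p) u) (N p))
      (frechet_derivative R (at p) v)"

end

theory Submission
  imports Defs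
begin

text \<open>At a zero p of the support function, X(p) is tangent to the surface, so X(p) = dR(w) for a
  tangent vector w. Because the metric only deforms the radial direction, the support function is
  \<open>\<phi> = (R \<bullet> N) / f(|R|)\<close> in Euclidean terms, the Christoffel term of \<open>\<nabla>\<^sub>w N\<close> vanishes, and one
  finds \<open>d\<phi>(w) = - h(w, w)\<close>, which is nonzero by strict convexity.\<close>

definition warp_coeff :: "(real \<Rightarrow> real) \<Rightarrow> real \<Rightarrow> real" where
  "warp_coeff f s = (1 / (f (sqrt s))\<^sup>2 - 1) / s"

text \<open>The case \<open>x = 0\<close> is covered because the radial term then vanishes.\<close>
lemma gm_eq_warp_coeff: "gm f x v w = v \<bullet> w + warp_coeff f (x \<bullet> x) * (v \<bullet> x) * (w \<bullet> x)"
  by (cases "x = 0") (auto simp: gm_def warp_coeff_def norm_eq_sqrt_inner power2_norm_eq_inner)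

lemma gm_commute: "gm f x v w = gm f x w v"
  by (simp add: gm_eq_warp_coeff inner_commute)

lemma gm_eq_inner_if_orthogonal: "v \<bullet> x = 0 \<Longrightarrow> gm f x v w = v \<bullet> w"
  by (simp add: gm_eq_warp_coeff)

lemma one_plus_warp_coeff:
  assumes "x \<noteq> 0" "f (norm x) \<noteq> 0"
  shows "1 + warp_coeff f (x \<bullet> x) * (x \<bullet> x) = 1 / (f (norm x))\<^sup>2"
  using assms by (simp add: warp_coeff_def norm_eq_sqrt_inner)

text \<open>No hypothesis on f is needed: if \<open>f(|x|) = 0\<close> both sides are 0 (as \<open>1/0 = 0\<close>).\<close>
lemma gm_ckf: "gm f x (ckf f x) v = (x \<bullet> v) / f (norm x)"
proof (cases "x = 0 \<or> f (norm x) = 0")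
  case True
  then show ?thesis by (auto simp: gm_def ckf_def)
next
  case False
  then have "gm f x (ckf f x) v = f (norm x) * (x \<bullet> v) * (1 + warp_coeff f (x \<bullet> x) * (x \<bullet> x))"
    by (simp add: gm_eq_warp_coeff ckf_def inner_commute algebra_simps)
  also have "\<dots> = (x \<bullet> v) / f (norm x)"
    using False by (simp add: one_plus_warp_coeff power2_eq_square)
  finally show ?thesis .
qed

lemma differentiable_warp_coeff:
  assumes "f differentiable (at (sqrt s))" "s > 0" "f (sqrt s) \<noteq> 0"
  shows "warp_coeff f differentiable (at s)"
proof -
  obtain d where d: "(f has_real_derivative d) (at (sqrt s))"
    using assms(1) real_differentiable_def by blast
  have "((\<lambda>s. f (sqrt s)) has_real_derivative d * (inverse (sqrt s) / 2)) (at s)"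
    using DERIV_chain2[OF d DERIV_real_sqrt[OF assms(2)]] .
  then have "\<exists>D. ((\<lambda>s. (1 / (f (sqrt s))\<^sup>2 - 1) / s) has_real_derivative D) (at s)"
    by (intro exI) (rule derivative_eq_intros refl | use assms in simp)+
  then show ?thesis
    unfolding warp_coeff_def[abs_def] real_differentiable_def by blast
qed

lemma dgm_eq:
  assumes "(warp_coeff f has_real_derivative c) (at (x \<bullet> x))"
  shows "dgm f x a b w = c * (2 * (a \<bullet> x)) * (b \<bullet> x) * (w \<bullet> x)
           + warp_coeff f (x \<bullet> x) * ((b \<bullet> a) * (w \<bullet> x) + (b \<bullet> x) * (w \<bullet> a))"
proof -
  have sq: "(\<lambda>t. (x + t *\<^sub>R a) \<bullet> (x + t *\<^sub>R a)) = (\<lambda>t. x \<bullet> x + 2 * t * (a \<bullet> x) + t\<^sup>2 * (a \<bullet> a))"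
    by (auto simp: inner_add inner_commute power2_eq_square algebra_simps)
  have "((\<lambda>t. (x + t *\<^sub>R a) \<bullet> (x + t *\<^sub>R a)) has_real_derivative 2 * (a \<bullet> x)) (at 0)"
    unfolding sq by (rule derivative_eq_intros refl | simp)+
  moreover have "(warp_coeff f has_real_derivative c) (at ((x + 0 *\<^sub>R a) \<bullet> (x + 0 *\<^sub>R a)))"
    using assms by simp
  ultimately have warp: "((\<lambda>t. warp_coeff f ((x + t *\<^sub>R a) \<bullet> (x + t *\<^sub>R a)))
      has_real_derivative c * (2 * (a \<bullet> x))) (at 0)"
    by (rule DERIV_chain2[rotated])
  have linear: "((\<lambda>t. v \<bullet> (x + t *\<^sub>R a)) has_real_derivative (v \<bullet> a)) (at 0)" for v
    unfolding inner_add_right inner_scaleR_right by (rule derivative_eq_intros refl | simp)+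
  have "((\<lambda>t. gm f (x + t *\<^sub>R a) b w) has_real_derivative
      c * (2 * (a \<bullet> x)) * (b \<bullet> x) * (w \<bullet> x)
      + warp_coeff f (x \<bullet> x) * ((b \<bullet> a) * (w \<bullet> x) + (b \<bullet> x) * (w \<bullet> a))) (at 0)"
    unfolding gm_eq_warp_coeff
    by (rule derivative_eq_intros warp linear refl)+ (simp add: algebra_simps)
  then show ?thesis
    unfolding dgm_def by (rule DERIV_imp_deriv)
qed

lemma chr_eq:
  assumes x: "x \<noteq> 0" and fx: "f (norm x) \<noteq> 0"
    and c: "(warp_coeff f has_real_derivative c) (at (x \<bullet> x))"
  shows "chr f x a b
    = ((c * (a \<bullet> x) * (b \<bullet> x) + warp_coeff f (x \<bullet> x) * (a \<bullet> b)) * (f (norm x))\<^sup>2) *\<^sub>R x"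
proof -
  define h where "h = warp_coeff f (x \<bullet> x)"
  define l where "l = c * (a \<bullet> x) * (b \<bullet> x) + h * (a \<bullet> b)"
  define F where "F = f (norm x)"
  define Koszul where "Koszul = (\<lambda>w. (dgm f x a b w + dgm f x b a w - dgm f x w a b) / 2)"
  have radial: "1 + h * (x \<bullet> x) = 1 / F\<^sup>2" "F \<noteq> 0"
    using one_plus_warp_coeff[of x f] x fx by (simp_all add: h_def F_def)
  have Koszul_eq: "Koszul w = l * (w \<bullet> x)" for w
    unfolding Koszul_def dgm_eq[OF c] l_def h_def by (simp add: inner_commute algebra_simps)
  have solution: "gm f x ((l * F\<^sup>2) *\<^sub>R x) w = Koszul w" for w
  proof -
    have "gm f x ((l * F\<^sup>2) *\<^sub>R x) w = l * F\<^sup>2 * (w \<bullet> x) * (1 + h * (x \<bullet> x))"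
      unfolding gm_eq_warp_coeff h_def by (simp add: inner_commute algebra_simps)
    then show ?thesis
      using radial by (simp add: Koszul_eq field_simps)
  qed
  have unique: "d = (l * F\<^sup>2) *\<^sub>R x" if "\<forall>w. gm f x d w = Koszul w" for d
  proof -
    define e where "e = (l * F\<^sup>2) *\<^sub>R x"
    have eq: "gm f x d w = gm f x e w" for w
      using that solution unfolding e_def by metis
    have "(d \<bullet> x) * (1 + h * (x \<bullet> x)) = (e \<bullet> x) * (1 + h * (x \<bullet> x))"
      using eq[of x] unfolding gm_eq_warp_coeff h_def by (simp add: algebra_simps)
    then have "d \<bullet> x = e \<bullet> x"
      using radial by simp
    then have "d \<bullet> w = e \<bullet> w" for w
      using eq[of w] unfolding gm_eq_warp_coeff by simp
    then have "(d - e) \<bullet> (d - e) = 0"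
      by (simp add: inner_diff_left)
    then show ?thesis
      unfolding e_def[symmetric] by simp
  qed
  have "chr f x a b = (THE d. \<forall>w. gm f x d w = Koszul w)"
    by (simp add: chr_def Koszul_def)
  also have "\<dots> = (l * F\<^sup>2) *\<^sub>R x"
    using solution unique by (intro the_equality) auto
  finally have "chr f x a b = (l * F\<^sup>2) *\<^sub>R x" .
  then show ?thesis
    unfolding l_def h_def F_def .
qed

lemma chr_eq_0_if_orthogonal:
  assumes "x \<noteq> 0" "f (norm x) \<noteq> 0" "warp_coeff f differentiable (at (x \<bullet> x))"
    and "b \<bullet> x = 0" "a \<bullet> b = 0"
  shows "chr f x a b = 0"
proof -
  obtain c where "(warp_coeff f has_real_derivative c) (at (x \<bullet> x))"
    using assms(3) real_differentiable_def by blast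
  then show ?thesis
    using chr_eq[of x f c a b] assms by simp
qed

lemma smooth_map_differentiable:
  assumes "smooth_map U F" "p \<in> U"
  shows "F differentiable (at p)"
proof -
  have "(\<lambda>x. F x \<bullet> i) differentiable at p" if "i \<in> Basis" for i
  proof -
    obtain k where k: "i = axis k 1"
      using \<open>i \<in> Basis\<close> by (auto simp: Basis_vec_def)
    have "smooth_fun U (\<lambda>x. F x $ k)"
      using assms(1) by (simp add: smooth_map_def)
    then have "(\<lambda>x. F x $ k) differentiable at p"
      using assms(2) unfolding smooth_fun_def by (metis foldr_Nil id_apply)
    then show ?thesis
      by (simp add: k inner_axis)
  qed
  then show ?thesis
    using differentiable_componentwise_within by blast
qed

lemma smooth1_differentiable: "smooth1 W f \<Longrightarrow> t \<in> W \<Longrightarrow> f differentiable (at t)"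
  unfolding smooth1_def by (metis funpow_0)

lemma linear_image_hyperplane_eq:
  fixes L :: "'a::euclidean_space \<Rightarrow> 'a"
  assumes L: "linear L" and "p \<noteq> 0" "n \<noteq> 0"
    and inj: "\<forall>u. u \<bullet> p = 0 \<longrightarrow> u \<noteq> 0 \<longrightarrow> L u \<noteq> 0"
    and into: "\<forall>u. u \<bullet> p = 0 \<longrightarrow> L u \<bullet> n = 0"
  shows "L ` {u. u \<bullet> p = 0} = {v. v \<bullet> n = 0}"
proof -
  have T: "{u. u \<bullet> p = 0} = {u. p \<bullet> u = 0}" and H: "{v. v \<bullet> n = 0} = {v. n \<bullet> v = 0}"
    by (auto simp: inner_commute)
  have "inj_on L {u. p \<bullet> u = 0}"
    unfolding inj_on_def
  proof (intro ballI impI)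
    fix u v assume "u \<in> {u. p \<bullet> u = 0}" "v \<in> {u. p \<bullet> u = 0}" "L u = L v"
    then have "(u - v) \<bullet> p = 0" "L (u - v) = 0"
      by (auto simp: inner_diff_left inner_diff_right inner_commute linear_diff[OF L])
    then show "u = v"
      using inj by auto
  qed
  then have "dim (L ` {u. p \<bullet> u = 0}) = dim {u. p \<bullet> u = 0}"
    using dim_image_eq[OF L] span_eq_iff subspace_hyperplane by metis
  moreover have "L ` {u. p \<bullet> u = 0} \<subseteq> {v. n \<bullet> v = 0}"
    using into by (auto simp: inner_commute)
  ultimately show ?thesis
    unfolding T H using subspace_dim_equal linear_subspace_image[OF L] subspace_hyperplane
      dim_hyperplane[OF \<open>p \<noteq> 0\<close>] dim_hyperplane[OF \<open>n \<noteq> 0\<close>] by (metis order.refl)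
qed

text \<open>The hypothesis \<open>N p \<bullet> R p = 0\<close> says that the support function vanishes at p.\<close>
lemma sff_ckf_direction:
  assumes x: "R p \<noteq> 0" "f (norm (R p)) \<noteq> 0" "warp_coeff f differentiable (at (R p \<bullet> R p))"
    and N_perp: "N p \<bullet> R p = 0"
    and w: "frechet_derivative R (at p) w = ckf f (R p)"
  shows "sff f R N p w w = - (R p \<bullet> frechet_derivative N (at p) w) / f (norm (R p))"
proof -
  have "ckf f (R p) \<bullet> N p = 0"
    using N_perp by (simp add: ckf_def inner_commute)
  then have "chr f (R p) (frechet_derivative R (at p) w) (N p) = 0"
    using chr_eq_0_if_orthogonal[OF x N_perp] w by simp
  then show ?thesis
    unfolding sff_def w by (simp add: gm_commute[of _ _ _ "ckf f (R p)"] gm_ckf)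
qed

lemma has_derivative_support_fun_at_zero:
  assumes R: "(R has_derivative L) (at p)" and N: "(N has_derivative N') (at p)"
    and x: "R p \<noteq> 0" "f (norm (R p)) \<noteq> 0" "f differentiable (at (norm (R p)))"
    and N_perp: "R p \<bullet> N p = 0"
  shows "((\<lambda>q. gm f (R q) (ckf f (R q)) (N q)) has_derivative
           (\<lambda>u. (L u \<bullet> N p + R p \<bullet> N' u) / f (norm (R p)))) (at p)"
proof -
  have "(\<lambda>q. norm (R q)) differentiable (at p)"
    using differentiable_compose[OF differentiable_norm_at[OF x(1)] differentiableI[OF R]] .
  then have "(\<lambda>q. f (norm (R q))) differentiable (at p)"
    using differentiable_compose[of f "\<lambda>q. norm (R q)" p] x(3) by blast
  then obtain E' where E: "((\<lambda>q. inverse (f (norm (R q)))) has_derivative E') (at p)"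
    using differentiable_inverse x(2) unfolding differentiable_def by blast
  have "((\<lambda>q. (R q \<bullet> N q) * inverse (f (norm (R q)))) has_derivative
          (\<lambda>u. (R p \<bullet> N' u + L u \<bullet> N p) * inverse (f (norm (R p))) + (R p \<bullet> N p) * E' u)) (at p)"
    by (rule has_derivative_eq_rhs, (rule has_derivative_mult has_derivative_inner R N E)+)
       (auto simp: algebra_simps)
  then show ?thesis
    using N_perp by (simp add: gm_ckf divide_inverse algebra_simps)
qed

theorem proposition9:
  fixes M :: "(real^3) set" and f :: "real \<Rightarrow> real"
    and R N :: "real^3 \<Rightarrow> real^3" and U V :: "(real^3) set" and W :: "real set"
  assumes M_open: "open M"
    and f_smooth: "smooth1 W f" "norm ` (M - {0}) \<subseteq> W"
    and f_pos: "\<forall>x\<in>M. f (norm x) > 0"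
    and metric_smooth: "\<forall>i j. smooth_fun M (\<lambda>x. gm f x (axis i 1) (axis j 1))"
    and R_smooth: "smooth_map U R" "sphere 0 1 \<subseteq> U"
    and R_inj: "inj_on R (sphere 0 1)"
    and R_imm: "\<forall>p\<in>sphere 0 1. \<forall>u. u \<bullet> p = 0 \<longrightarrow> u \<noteq> 0 \<longrightarrow> frechet_derivative R (at p) u \<noteq> 0"
    and R_in: "R ` sphere 0 1 \<subseteq> M"
    and N_smooth: "smooth_map V N" "sphere 0 1 \<subseteq> V"
    and N_unit: "\<forall>p\<in>sphere 0 1. gm f (R p) (N p) (N p) = 1"
    and N_normal: "\<forall>p\<in>sphere 0 1. \<forall>u. u \<bullet> p = 0 \<longrightarrow>
                     gm f (R p) (N p) (frechet_derivative R (at p) u) = 0"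
    and convex: "\<forall>p\<in>sphere 0 1. \<forall>u. u \<bullet> p = 0 \<longrightarrow> u \<noteq> 0 \<longrightarrow> sff f R N p u u > 0"
  shows "\<forall>p \<in> {p \<in> sphere 0 1. R p \<noteq> 0 \<and> gm f (R p) (ckf f (R p)) (N p) = 0}.
           \<exists>D. ((\<lambda>x. gm f (R x) (ckf f (R x)) (N x)) has_derivative D) (at p)
               \<and> (\<exists>u. u \<bullet> p = 0 \<and> D u \<noteq> 0)"
proof (intro ballI)
  fix p assume "p \<in> {p \<in> sphere 0 1. R p \<noteq> 0 \<and> gm f (R p) (ckf f (R p)) (N p) = 0}"
  then have p: "p \<in> sphere 0 1" and x: "R p \<noteq> 0" and zero: "gm f (R p) (ckf f (R p)) (N p) = 0"
    by auto
  define L where "L = frechet_derivative R (at p)"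
  define N' where "N' = frechet_derivative N (at p)"
  have "R p \<in> M"
    using R_in p by auto
  then have F: "f (norm (R p)) > 0" "f differentiable (at (norm (R p)))"
    using f_pos f_smooth x by (auto intro!: smooth1_differentiable)
  have R_diff: "R differentiable (at p)" and N_diff: "N differentiable (at p)"
    using smooth_map_differentiable R_smooth N_smooth p by auto
  have N_perp: "R p \<bullet> N p = 0"
    using zero F(1) by (simp add: gm_ckf)
  have "N p \<noteq> 0"
    using N_unit[rule_format, OF p] by (cases "N p = 0") (auto simp: gm_eq_warp_coeff)
  moreover have "\<forall>u. u \<bullet> p = 0 \<longrightarrow> L u \<bullet> N p = 0"
    using N_normal[rule_format, OF p] gm_eq_inner_if_orthogonal[of "N p" "R p"] N_perp
    by (auto simp: L_def inner_commute)
  ultimately have "L ` {u. u \<bullet> p = 0} = {v. v \<bullet> N p = 0}"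
    using linear_image_hyperplane_eq[of L p "N p"] R_imm p R_diff
    by (simp add: L_def linear_frechet_derivative) (metis norm_zero zero_neq_one)
  moreover have "ckf f (R p) \<bullet> N p = 0"
    using N_perp by (simp add: ckf_def)
  ultimately obtain w where w: "w \<bullet> p = 0" "L w = ckf f (R p)"
    by (metis (mono_tags, lifting) imageE mem_Collect_eq)
  then have "w \<noteq> 0"
    using x F(1) R_diff by (auto simp: ckf_def L_def linear_frechet_derivative linear_0)
  have "warp_coeff f differentiable (at (R p \<bullet> R p))"
    using differentiable_warp_coeff[of f "R p \<bullet> R p"] F x by (simp add: norm_eq_sqrt_inner)
  then have "sff f R N p w w = - (R p \<bullet> N' w) / f (norm (R p))"
    using sff_ckf_direction[of R p f N w] x F N_perp w(2) by (simp add: L_def N'_def inner_commute)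
  moreover have "sff f R N p w w > 0"
    using convex p w(1) \<open>w \<noteq> 0\<close> by auto
  moreover have "((\<lambda>q. gm f (R q) (ckf f (R q)) (N q)) has_derivative
      (\<lambda>u. (L u \<bullet> N p + R p \<bullet> N' u) / f (norm (R p)))) (at p)"
    using has_derivative_support_fun_at_zero[of R L p N N' f] R_diff N_diff x F N_perp
    by (simp add: L_def N'_def frechet_derivative_works)
  ultimately show "\<exists>D. ((\<lambda>x. gm f (R x) (ckf f (R x)) (N x)) has_derivative D) (at p)
                       \<and> (\<exists>u. u \<bullet> p = 0 \<and> D u \<noteq> 0)"
    using w N_perp by (intro exI conjI exI[of _ w]) (auto simp: ckf_def inner_commute)
qed

end
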